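(* Let $N\ge2$, $x_1>\cdots>x_N$ real, and $\mathbf A\in\mathbb R^{N\times N}$ with $\mathbf A_{i,n}=|x_i-x_n|$. Then $\mathbf A$ is invertible and $\mathbf A^{-1}=\frac12\mathbf P\mathbf E\mathbf D\mathbf E$, where $$\mathbf P=\begin{pmatrix}\mathbf 0^T & 1\\ I_{N-1} & \mathbf 0\end{pmatrix},\qquad \mathbf E=\begin{pmatrix}\Delta & -\mathbf e\\ -\mathbf e_1^T & -1\end{pmatrix},$$ $\mathbf D\in\mathbb R^{N\times N}$ is diagonal with $\mathbf D_{i,i}=\frac1{x_i-x_{i+1}}$ for $i\in[N-1]$ and $\mathbf D_{N,N}=\frac1{x_1-x_N}$, $\mathbf 0\in\mathbb R^{N-1}$ is the zero vector, $\mathbf e=(0,\dots,0,1)^T\in\mathbb R^{N-1}$ and $\mathbf e_1=(1,0,\dots,0)^T\in\mathbb R^{N-1}$.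
   Context: $\Delta\in\mathbb R^{(N-1)\times(N-1)}$ is the finite difference matrix with $\Delta_{i,i}=1$, $\Delta_{i,i+1}=-1$, and all other entries $0$; $I_{N-1}$ is the identity matrix. *)

theory Defs
  imports "Jordan_Normal_Form.Matrix"
begin

text \<open>Indices are 0-based: the paper's index i in [N] corresponds to i-1 here.
  The points x_1 > ... > x_N are x 0 > ... > x (N-1).\<close>

definition distA :: "nat \<Rightarrow> (nat \<Rightarrow> real) \<Rightarrow> real mat" where
  "distA N x = mat N N (\<lambda>(i, n). \<bar>x i - x n\<bar>)"

text \<open>P = [0^T 1; I_{N-1} 0]\<close>
definition permP :: "nat \<Rightarrow> real mat" where
  "permP N = mat N N (\<lambda>(i, j).
     if i = 0 then (if j = N - 1 then 1 else 0)
     else (if j < N - 1 \<and> j = i - 1 then 1 else 0))"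

text \<open>E = [Delta, -e; -e_1^T, -1], Delta the (N-1)x(N-1) finite difference matrix.\<close>
definition matE :: "nat \<Rightarrow> real mat" where
  "matE N = mat N N (\<lambda>(i, j).
     if i < N - 1 \<and> j < N - 1 then
        (if j = i then 1 else if j = i + 1 then -1 else 0)
     else if i < N - 1 \<and> j = N - 1 then (if i = N - 2 then -1 else 0)
     else if i = N - 1 \<and> j < N - 1 then (if j = 0 then -1 else 0)
     else -1)"

definition matD :: "nat \<Rightarrow> (nat \<Rightarrow> real) \<Rightarrow> real mat" where
  "matD N x = mat N N (\<lambda>(i, j).
     if i = j then (if i < N - 1 then 1 / (x i - x (i + 1)) else 1 / (x 0 - x (N - 1)))
     else 0)"

end

theory Submission
  imports Defs "Jordan_Normal_Form.Determinant"
begin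

(* Left multiplication by E replaces row k by row k minus row k+1 (for k < N-1) and the last
   row by minus the sum of the first and last rows. For decreasing points, row k minus row k+1
   of the distance matrix is the gap x_k - x_(k+1) times a pattern of signs, and minus the sum
   of the first and last rows is constantly -(x_1 - x_N). So D E A is a +-1 matrix, E maps it to
   twice the cyclic shift of rows, and P undoes that shift. A left inverse of a square matrix
   is also a right inverse. *)

lemma sum_of_bool_eq_mult_upt:
  fixes k0 N :: nat
  assumes "k0 < N"
  shows "(\<Sum>k = 0..<N. of_bool (k = k0) * f k) = (f k0 :: 'a :: semiring_1)"
proof -
  have "{0..<N} \<inter> {k. k = k0} = {k0}" using assms by auto
  then show ?thesis by simp
qed

lemma distA_carrier [simp]: "distA N x \<in> carrier_mat N N"
  by (simp add: distA_def)

lemma permP_carrier [simp]: "permP N \<in> carrier_mat N N"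
  by (simp add: permP_def)

lemma matE_carrier [simp]: "matE N \<in> carrier_mat N N"
  by (simp add: matE_def)

lemma matD_carrier [simp]: "matD N x \<in> carrier_mat N N"
  by (simp add: matD_def)

lemma matE_mult_index:
  assumes "N \<ge> 2" "X \<in> carrier_mat N nc" "i < N" "n < nc"
  shows "(matE N * X) $$ (i, n) =
    (if i < N - 1 then X $$ (i, n) - X $$ (i + 1, n) else - X $$ (0, n) - X $$ (N - 1, n))"
proof -
  have "(matE N * X) $$ (i, n) = (\<Sum>k = 0..<N.
      (if i < N - 1 then of_bool (k = i) - of_bool (k = i + 1)
       else - of_bool (k = 0) - of_bool (k = N - 1)) * X $$ (k, n))"
    using assms by (auto simp: matE_def scalar_prod_def intro!: sum.cong)
  then show ?thesis
    using assms by (simp add: left_diff_distrib sum_subtractf sum_negf sum_of_bool_eq_mult_upt)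
qed

lemma permP_mult_index:
  assumes "N \<ge> 2" "X \<in> carrier_mat N nc" "i < N" "n < nc"
  shows "(permP N * X) $$ (i, n) = X $$ (if i = 0 then N - 1 else i - 1, n)"
proof -
  have entry: "permP N $$ (i, k) = of_bool (k = (if i = 0 then N - 1 else i - 1))" if "k < N" for k
    using assms that by (auto simp: permP_def)
  have "(permP N * X) $$ (i, n) = (\<Sum>k = 0..<N. permP N $$ (i, k) * X $$ (k, n))"
    using assms by (simp add: permP_def scalar_prod_def)
  also have "\<dots> = (\<Sum>k = 0..<N. of_bool (k = (if i = 0 then N - 1 else i - 1)) * X $$ (k, n))"
    using entry by (intro sum.cong) auto
  also have "\<dots> = X $$ (if i = 0 then N - 1 else i - 1, n)"
    by (rule sum_of_bool_eq_mult_upt) (use assms in auto)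
  finally show ?thesis .
qed

definition cyclic_gap :: "nat \<Rightarrow> (nat \<Rightarrow> real) \<Rightarrow> nat \<Rightarrow> real" where
  "cyclic_gap N x i = (if i < N - 1 then x i - x (i + 1) else x 0 - x (N - 1))"

lemma matD_mult_index:
  assumes "X \<in> carrier_mat N nc" "i < N" "n < nc"
  shows "(matD N x * X) $$ (i, n) = X $$ (i, n) / cyclic_gap N x i"
proof -
  have "(matD N x * X) $$ (i, n) = (\<Sum>k = 0..<N. of_bool (k = i) * (X $$ (k, n) / cyclic_gap N x i))"
    using assms by (auto simp: matD_def cyclic_gap_def scalar_prod_def intro!: sum.cong)
  also have "\<dots> = X $$ (i, n) / cyclic_gap N x i"
    by (rule sum_of_bool_eq_mult_upt[OF assms(2)])
  finally show ?thesis .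
qed

lemma cyclic_gap_pos:
  assumes "N \<ge> 2" "\<And>i j. i < j \<Longrightarrow> j < N \<Longrightarrow> x j < x i" "i < N"
  shows "cyclic_gap N x i > 0"
  using assms by (auto simp: cyclic_gap_def)

definition sign_mat :: "nat \<Rightarrow> real mat" where
  "sign_mat N = mat N N (\<lambda>(i, n). if i < N - 1 \<and> i < n then 1 else -1)"

definition cyclic_shift_mat :: "nat \<Rightarrow> real mat" where
  "cyclic_shift_mat N = mat N N (\<lambda>(i, n). of_bool (n = (if i < N - 1 then i + 1 else 0)))"

lemma sign_mat_carrier [simp]: "sign_mat N \<in> carrier_mat N N"
  by (simp add: sign_mat_def)

lemma cyclic_shift_mat_carrier [simp]: "cyclic_shift_mat N \<in> carrier_mat N N"
  by (simp add: cyclic_shift_mat_def)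

lemma matE_distA_index:
  assumes "N \<ge> 2" "\<And>i j. i < j \<Longrightarrow> j < N \<Longrightarrow> x j < x i" "i < N" "n < N"
  shows "(matE N * distA N x) $$ (i, n) = cyclic_gap N x i * sign_mat N $$ (i, n)"
proof -
  have antimono: "x j \<le> x i" if "i \<le> j" "j < N" for i j
    using assms(2)[of i j] that by (cases "i = j") auto
  have "(matE N * distA N x) $$ (i, n) = (if i < N - 1
      then distA N x $$ (i, n) - distA N x $$ (i + 1, n)
      else - distA N x $$ (0, n) - distA N x $$ (N - 1, n))"
    by (rule matE_mult_index[OF assms(1) distA_carrier assms(3,4)])
  also have "\<dots> = (if i < N - 1
      then \<bar>x i - x n\<bar> - \<bar>x (i + 1) - x n\<bar> else - \<bar>x 0 - x n\<bar> - \<bar>x (N - 1) - x n\<bar>)"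
    using assms by (simp add: distA_def)
  also have "\<dots> = cyclic_gap N x i * sign_mat N $$ (i, n)"
  proof (cases "i < N - 1")
    case True
    then show ?thesis
      using assms antimono[of i n] antimono[of n i] antimono[of "i + 1" n] antimono[of n "i + 1"]
      by (auto simp: cyclic_gap_def sign_mat_def abs_if)
  next
    case False
    then show ?thesis
      using assms antimono[of 0 n] antimono[of n "N - 1"]
      by (auto simp: cyclic_gap_def sign_mat_def abs_if)
  qed
  finally show ?thesis .
qed

lemma matD_matE_distA:
  assumes "N \<ge> 2" "\<And>i j. i < j \<Longrightarrow> j < N \<Longrightarrow> x j < x i"
  shows "matD N x * (matE N * distA N x) = sign_mat N"
proof (rule eq_matI)
  fix i n assume "i < dim_row (sign_mat N)" "n < dim_col (sign_mat N)"
  then have i: "i < N" and n: "n < N" by (auto simp: sign_mat_def)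
  have "(matD N x * (matE N * distA N x)) $$ (i, n) =
      (matE N * distA N x) $$ (i, n) / cyclic_gap N x i"
    by (rule matD_mult_index[OF mult_carrier_mat[OF matE_carrier distA_carrier] i n])
  then show "(matD N x * (matE N * distA N x)) $$ (i, n) = sign_mat N $$ (i, n)"
    using cyclic_gap_pos[of N x, OF assms i] by (simp add: matE_distA_index[of N x, OF assms i n])
qed (auto simp: sign_mat_def matD_def distA_def)

lemma matE_sign_mat:
  assumes "N \<ge> 2"
  shows "matE N * sign_mat N = 2 \<cdot>\<^sub>m cyclic_shift_mat N"
proof (rule eq_matI)
  fix i n assume "i < dim_row (2 \<cdot>\<^sub>m cyclic_shift_mat N)" "n < dim_col (2 \<cdot>\<^sub>m cyclic_shift_mat N)"
  then have "i < N" "n < N" by (auto simp: cyclic_shift_mat_def)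
  then show "(matE N * sign_mat N) $$ (i, n) = (2 \<cdot>\<^sub>m cyclic_shift_mat N) $$ (i, n)"
    using assms matE_mult_index[OF assms sign_mat_carrier]
    by (auto simp: sign_mat_def cyclic_shift_mat_def)
qed (auto simp: cyclic_shift_mat_def sign_mat_def matE_def)

lemma permP_cyclic_shift_mat:
  assumes "N \<ge> 2"
  shows "permP N * cyclic_shift_mat N = 1\<^sub>m N"
proof (rule eq_matI)
  fix i n assume "i < dim_row (1\<^sub>m N :: real mat)" "n < dim_col (1\<^sub>m N :: real mat)"
  then have "i < N" "n < N" by auto
  then show "(permP N * cyclic_shift_mat N) $$ (i, n) = 1\<^sub>m N $$ (i, n)"
    using assms permP_mult_index[OF assms cyclic_shift_mat_carrier]
    by (auto simp: cyclic_shift_mat_def)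
qed (auto simp: cyclic_shift_mat_def permP_def)

lemma distA_left_inverse:
  assumes "N \<ge> 2" "\<And>i j. i < j \<Longrightarrow> j < N \<Longrightarrow> x j < x i"
  shows "(1/2) \<cdot>\<^sub>m (permP N * matE N * matD N x * matE N) * distA N x = 1\<^sub>m N"
proof -
  have "(1/2) \<cdot>\<^sub>m (permP N * matE N * matD N x * matE N) * distA N x =
      (1/2) \<cdot>\<^sub>m (permP N * matE N * matD N x * matE N * distA N x)"
    by (rule mult_smult_assoc_mat[of _ N N _ N]) (simp_all add: mult_carrier_mat[of _ N N _ N])
  also have "permP N * matE N * matD N x * matE N * distA N x =
      permP N * (matE N * (matD N x * (matE N * distA N x)))"
    by (simp add: assoc_mult_mat[of _ N N _ N _ N] mult_carrier_mat[of _ N N _ N])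
  also have "\<dots> = permP N * (2 \<cdot>\<^sub>m cyclic_shift_mat N)"
    by (simp add: matD_matE_distA[OF assms] matE_sign_mat[OF assms(1)])
  also have "\<dots> = 2 \<cdot>\<^sub>m 1\<^sub>m N"
    by (simp add: mult_smult_distrib[OF permP_carrier cyclic_shift_mat_carrier]
        permP_cyclic_shift_mat[OF assms(1)])
  also have "(1/2) \<cdot>\<^sub>m (2 \<cdot>\<^sub>m 1\<^sub>m N) = (1\<^sub>m N :: real mat)"
    by (rule eq_matI) auto
  finally show ?thesis .
qed

theorem lemma22:
  fixes N :: nat and x :: "nat \<Rightarrow> real"
  assumes "N \<ge> 2"
    and "\<And>i j. i < j \<Longrightarrow> j < N \<Longrightarrow> x j < x i"
  shows "invertible_mat (distA N x) \<and>
         inverts_mat (distA N x) ((1/2) \<cdot>\<^sub>m (permP N * matE N * matD N x * matE N)) \<and>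
         inverts_mat ((1/2) \<cdot>\<^sub>m (permP N * matE N * matD N x * matE N)) (distA N x)"
proof -
  let ?B = "(1/2) \<cdot>\<^sub>m (permP N * matE N * matD N x * matE N)"
  have B_carrier: "?B \<in> carrier_mat N N"
    by (simp add: mult_carrier_mat[of _ N N _ N])
  have left: "?B * distA N x = 1\<^sub>m N"
    by (rule distA_left_inverse[OF assms])
  then have right: "distA N x * ?B = 1\<^sub>m N"
    by (rule mat_mult_left_right_inverse[OF B_carrier distA_carrier])
  have "inverts_mat (distA N x) ?B" "inverts_mat ?B (distA N x)"
    using left right by (simp_all add: inverts_mat_def distA_def permP_def)
  then show ?thesis
    by (auto simp: invertible_mat_def distA_def)
qed

end
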